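(* If $X$ is a finite quasi-metric space, then \[ |X|_{\mathbb{Q}(q^\mathbb{R})} = \sum_{n=0}^\infty (-1)^n \,\mathrm{rk}\, \mathit{HM}_n(X)\] in $\mathbb{Q}(\!(q^\mathbb{R})\!)$, the infinite sum converging in the topology of $\mathbb{Q}(\!(q^\mathbb{R})\!)$.
   Context: A quasi-metric space is a skeletal $[0,\infty)$-enriched category ($d(x,x)=0$, triangle inequality, $d(x,y)>0$ for $x\ne y$, not necessarily symmetric). $\mathbb{Q}(q^\mathbb{R})$ is the field of generalized rational functions (fractions of finite sums $\sum a_i q^{\ell_i}$, $a_i\in\mathbb{Q}$, $\ell_i\in\mathbb{R}$), embedded in the field $\mathbb{Q}(\!(q^\mathbb{R})\!)$ of Hahn series (formal $\sum_\ell a_\ell q^\ell$ with well-ordered support), which carries the valuation topology (a series converges iff the smallest exponents of its terms tend to $\infty$). The magnitude $|X|_{\mathbb{Q}(q^\mathbb{R})}$ is the sum of all entries of the inverse of the matrix $Z_X(x,y)=q^{d(x,y)}$ (which is invertible over $\mathbb{Q}(q^\mathbb{R})$ for finite quasi-metric spaces). Magnitude homology: $\mathit{HM}_n(X)=\{\mathit{HM}^\ell_n(X)\}_{\ell\in\mathbb{R}}$, where $\mathit{HM}^\ell_n(X)$ is the degree-$n$ homology of the chain complex whose $n$-chains in grading $\ell$ are freely generated by tuples $(x_0,\dots,x_n)$ with $x_i\neq x_{i+1}$ and $d(x_0,x_1)+\cdots+d(x_{n-1},x_n)=\ell$, with boundary $\sum_i(-1)^i d^i$ where $d^i$ deletes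 $x_i$ if $d(x_{i-1},x_i)+d(x_i,x_{i+1})=d(x_{i-1},x_{i+1})$ (for interior $i$; endpoint deletions always change the distance) and is $0$ otherwise. Its rank $\mathrm{rk}\,\mathit{HM}_n(X)$ is the Hahn series $\sum_\ell \mathrm{rk}(\mathit{HM}^\ell_n(X))\,q^\ell$. *)

theory Defs
  imports "HOL-Analysis.Analysis" "HOL-Library.Function_Algebras"
begin

definition quasi_metric_space :: "'a set \<Rightarrow> ('a \<Rightarrow> 'a \<Rightarrow> real) \<Rightarrow> bool" where
  "quasi_metric_space X d \<longleftrightarrow>
     (\<forall>x\<in>X. d x x = 0) \<and>
     (\<forall>x\<in>X. \<forall>y\<in>X. \<forall>z\<in>X. d x z \<le> d x y + d y z) \<and>
     (\<forall>x\<in>X. \<forall>y\<in>X. x \<noteq> y \<longrightarrow> d x y > 0)"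

text \<open>A Hahn series sum_l a_l q^l is represented by its coefficient function l |-> a_l;
  it must have well-ordered support.\<close>

definition hahn :: "(real \<Rightarrow> rat) \<Rightarrow> bool" where
  "hahn f \<longleftrightarrow> (\<forall>S. S \<subseteq> {l. f l \<noteq> 0} \<longrightarrow> S \<noteq> {} \<longrightarrow> (\<exists>m\<in>S. \<forall>s\<in>S. m \<le> s))"

definition qpow :: "real \<Rightarrow> (real \<Rightarrow> rat)" where
  "qpow a = (\<lambda>l. if l = a then 1 else 0)"

text \<open>Product of Hahn series (the index sets are finite for Hahn series).\<close>
definition hahn_mult :: "(real \<Rightarrow> rat) \<Rightarrow> (real \<Rightarrow> rat) \<Rightarrow> (real \<Rightarrow> rat)" where
  "hahn_mult f g = (\<lambda>l. \<Sum>a\<in>{a. f a \<noteq> 0 \<and> g (l - a) \<noteq> 0}. f a * g (l - a))"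

text \<open>Convergence in the valuation topology: s_N -> S iff the valuation of S - s_N tends to
  infinity, i.e. for every bound L eventually s_N and S agree at all exponents below L.\<close>
definition hahn_tendsto :: "(nat \<Rightarrow> (real \<Rightarrow> rat)) \<Rightarrow> (real \<Rightarrow> rat) \<Rightarrow> bool" where
  "hahn_tendsto s S \<longleftrightarrow> (\<forall>L::real. \<exists>N0. \<forall>N\<ge>N0. \<forall>l<L. s N l = S l)"

definition similarity_matrix :: "('a \<Rightarrow> 'a \<Rightarrow> real) \<Rightarrow> 'a \<Rightarrow> 'a \<Rightarrow> (real \<Rightarrow> rat)" where
  "similarity_matrix d x y = qpow (d x y)"

definition is_inverse_of_Z :: "'a set \<Rightarrow> ('a \<Rightarrow> 'a \<Rightarrow> real) \<Rightarrow> ('a \<Rightarrow> 'a \<Rightarrow> (real \<Rightarrow> rat)) \<Rightarrow> bool" where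
  "is_inverse_of_Z X d W \<longleftrightarrow>
     (\<forall>x\<in>X. \<forall>y\<in>X. hahn (W x y)) \<and>
     (\<forall>x\<in>X. \<forall>z\<in>X. (\<lambda>l. \<Sum>y\<in>X. hahn_mult (similarity_matrix d x y) (W y z) l)
                        = (if x = z then qpow 0 else (\<lambda>_. 0))) \<and>
     (\<forall>x\<in>X. \<forall>z\<in>X. (\<lambda>l. \<Sum>y\<in>X. hahn_mult (W x y) (similarity_matrix d y z) l)
                        = (if x = z then qpow 0 else (\<lambda>_. 0)))"

definition magnitude :: "'a set \<Rightarrow> ('a \<Rightarrow> 'a \<Rightarrow> real) \<Rightarrow> (real \<Rightarrow> rat)" where
  "magnitude X d = (THE m. \<exists>W. is_inverse_of_Z X d W \<and> m = (\<lambda>l. \<Sum>x\<in>X. \<Sum>y\<in>X. W x y l))"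

definition mag_gens :: "'a set \<Rightarrow> ('a \<Rightarrow> 'a \<Rightarrow> real) \<Rightarrow> nat \<Rightarrow> real \<Rightarrow> 'a list set" where
  "mag_gens X d n l = {t. length t = Suc n \<and> set t \<subseteq> X \<and>
      (\<forall>i<n. t ! i \<noteq> t ! Suc i) \<and> (\<Sum>i<n. d (t ! i) (t ! Suc i)) = l}"

text \<open>Coefficient of the generator u in the boundary of the generator t (of degree n).
  Only interior deletions (1 <= i <= n-1) can contribute; endpoint faces are 0.\<close>
definition bd_coeff :: "('a \<Rightarrow> 'a \<Rightarrow> real) \<Rightarrow> nat \<Rightarrow> 'a list \<Rightarrow> 'a list \<Rightarrow> rat" where
  "bd_coeff d n t u = (\<Sum>i\<in>{1..n-1}.
      if d (t ! (i - 1)) (t ! i) + d (t ! i) (t ! Suc i) = d (t ! (i - 1)) (t ! Suc i)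
         \<and> take i t @ drop (Suc i) t = u
      then (-1) ^ i else 0)"

definition mag_chains :: "'a set \<Rightarrow> ('a \<Rightarrow> 'a \<Rightarrow> real) \<Rightarrow> nat \<Rightarrow> real \<Rightarrow> ('a list \<Rightarrow> rat) set" where
  "mag_chains X d n l = {c. \<forall>t. c t \<noteq> 0 \<longrightarrow> t \<in> mag_gens X d n l}"

definition mag_boundary :: "'a set \<Rightarrow> ('a \<Rightarrow> 'a \<Rightarrow> real) \<Rightarrow> nat \<Rightarrow> real \<Rightarrow> ('a list \<Rightarrow> rat) \<Rightarrow> ('a list \<Rightarrow> rat)" where
  "mag_boundary X d n l c = (\<lambda>u. \<Sum>t\<in>mag_gens X d n l. c t * bd_coeff d n t u)"

definition mag_cycles :: "'a set \<Rightarrow> ('a \<Rightarrow> 'a \<Rightarrow> real) \<Rightarrow> nat \<Rightarrow> real \<Rightarrow> ('a list \<Rightarrow> rat) set" where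
  "mag_cycles X d n l = {c \<in> mag_chains X d n l. mag_boundary X d n l c = (\<lambda>_. 0)}"

definition mag_boundaries :: "'a set \<Rightarrow> ('a \<Rightarrow> 'a \<Rightarrow> real) \<Rightarrow> nat \<Rightarrow> real \<Rightarrow> ('a list \<Rightarrow> rat) set" where
  "mag_boundaries X d n l = mag_boundary X d (Suc n) l ` mag_chains X d (Suc n) l"

definition rat_scale :: "rat \<Rightarrow> ('a list \<Rightarrow> rat) \<Rightarrow> ('a list \<Rightarrow> rat)" where
  "rat_scale r c = (\<lambda>t. r * c t)"

definition HM_rank :: "'a set \<Rightarrow> ('a \<Rightarrow> 'a \<Rightarrow> real) \<Rightarrow> nat \<Rightarrow> real \<Rightarrow> nat" where
  "HM_rank X d n l = vector_space.dim rat_scale (mag_cycles X d n l)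
                     - vector_space.dim rat_scale (mag_boundaries X d n l)"

definition HM_rank_series :: "'a set \<Rightarrow> ('a \<Rightarrow> 'a \<Rightarrow> real) \<Rightarrow> nat \<Rightarrow> (real \<Rightarrow> rat)" where
  "HM_rank_series X d n = (\<lambda>l. of_nat (HM_rank X d n l))"

end

(*
  Fix a grading l.  A tuple of n + 1 points with consecutive points distinct has length at least
  n * delta, delta the least nonzero distance, so the magnitude chain complex in grading l is a
  bounded complex of finite-dimensional rational vector spaces, and the alternating sum of its
  homology ranks is the alternating count of its generators.  Write Z = I + (Z - I): the (x, z)
  entry of (Z - I)^n, read at q^l, counts the generators of degree n and length l running from
  x to z, so the alternating sums W = sum_n (-1)^n (Z - I)^n are finite in each grading and
  telescope to a two-sided inverse of Z.  As every off-diagonal entry of Z - I has valuation at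
  least delta > 0, the inverse of Z among Hahn series is unique, so the magnitude is the sum of
  the entries of W, which in grading l is the alternating count of all generators.
*)

theory Submission
  imports Defs
begin

section \<open>Rank--nullity for finitely spanned subspaces\<close>

context vector_space begin

lemma independent_span_Diff_Int_span:
  assumes "independent B" "finite B" "K \<subseteq> B"
  shows "span (B - K) \<inter> span K = {0}"
proof (intro equalityI subsetI)
  fix x assume x: "x \<in> span (B - K) \<inter> span K"
  have "finite K" using assms(2,3) finite_subset by blast
  then have "x \<in> range (\<lambda>u. \<Sum>v\<in>B - K. u v *s v)" "x \<in> range (\<lambda>w. \<Sum>v\<in>K. w v *s v)"
    using x span_finite[of "B - K"] span_finite[of K] assms(2) by auto
  then obtain u w where u: "x = (\<Sum>v\<in>B - K. u v *s v)" and w: "x = (\<Sum>v\<in>K. w v *s v)"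
    by blast
  define g where "g v = (if v \<in> K then - w v else u v)" for v
  have "(\<Sum>v\<in>B. g v *s v) = (\<Sum>v\<in>B - K. g v *s v) + (\<Sum>v\<in>K. g v *s v)"
    using sum.subset_diff[OF assms(3,2)] by simp
  also have "(\<Sum>v\<in>B - K. g v *s v) = x" unfolding u g_def by (rule sum.cong) auto
  also have "(\<Sum>v\<in>K. g v *s v) = - x" unfolding w g_def by (simp add: sum_negf)
  finally have "(\<Sum>v\<in>B. g v *s v) = 0" by simp
  then have "\<forall>v\<in>B. g v = 0"
    using assms(1,2) independent_explicit_finite_subsets by blast
  then have "\<forall>v\<in>B - K. u v = 0" unfolding g_def by auto
  then show "x \<in> {0}" unfolding u by simp
qed (simp add: span_zero)

lemma dim_kernel_plus_dim_image:
  assumes f: "module_hom scale scale f" and C: "subspace C" "C \<subseteq> span G" and "finite G"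
  shows "dim C = dim {c\<in>C. f c = 0} + dim (f ` C)"
proof -
  interpret f: module_hom scale scale f by (rule f)
  let ?V = "{c\<in>C. f c = 0}"
  obtain K where K: "K \<subseteq> ?V" "independent K" "?V \<subseteq> span K" "card K = dim ?V"
    using basis_exists by blast
  obtain B where B: "K \<subseteq> B" "B \<subseteq> C" "independent B" "C \<subseteq> span B"
    using maximal_independent_subset_extend[of K C] K by auto
  have "finite B" using independent_span_bound[OF \<open>finite G\<close> B(3)] B C by auto
  let ?R = "B - K"
  have "inj_on f (span ?R)"
  proof (subst f.inj_on_iff_eq_0[OF subspace_span], intro ballI impI)
    fix x assume "x \<in> span ?R" "f x = 0"
    moreover from this have "x \<in> span K"
      using K(3) B(2) C(1) span_minimal[of ?R C] by blast
    ultimately show "x = 0"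
      using independent_span_Diff_Int_span[OF B(3) \<open>finite B\<close> B(1)] by blast
  qed
  then have indep: "independent (f ` ?R)" and card: "card (f ` ?R) = card ?R"
    using f.independent_injective_image[of ?R] independent_mono[OF B(3)]
      card_image[OF inj_on_subset[OF _ span_superset]] by auto
  have "f ` C \<subseteq> span (f ` B)" using B(4) f.span_image[of B] by auto
  also have "span (f ` B) \<subseteq> span (f ` ?R)"
    using K(1) span_mono[of "f ` B" "insert 0 (f ` ?R)"] span_insert_0 by force
  finally have "card (f ` ?R) = dim (f ` C)"
    using basis_card_eq_dim[of "f ` ?R" "f ` C"] B(2) indep by blast
  moreover have "card B = dim C" using basis_card_eq_dim[OF B(2,4,3)] .
  moreover have "card B = card K + card ?R"
    using card_Diff_subset[OF finite_subset[OF B(1) \<open>finite B\<close>] B(1)] card_mono[OF \<open>finite B\<close> B(1)]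
    by simp
  ultimately show ?thesis using K(4) card by simp
qed

lemma dim_subset_finitely_spanned:
  assumes "S \<subseteq> T" "T \<subseteq> span G" "finite G"
  shows "dim S \<le> dim T"
proof -
  obtain K where K: "K \<subseteq> T" "independent K" "T \<subseteq> span K" "card K = dim T"
    using basis_exists by blast
  have "finite K" using independent_span_bound[OF assms(3) K(2)] K(1) assms(2) by auto
  then show ?thesis using dim_le_card[of S K] K assms(1) by auto
qed

end


fun path_length :: "('a \<Rightarrow> 'a \<Rightarrow> real) \<Rightarrow> 'a list \<Rightarrow> real" where
  "path_length d (x # y # t) = d x y + path_length d (y # t)"
| "path_length d _ = 0"

lemma path_length_conv_nth: "path_length d t = (\<Sum>i<length t - 1. d (t ! i) (t ! Suc i))"
  by (induction d t rule: path_length.induct) (simp_all add: sum.lessThan_Suc_shift del: sum.lessThan_Suc)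

lemma path_length_append:
  "path_length d (a @ p # t) = path_length d (a @ [p]) + path_length d (p # t)"
  by (induction a rule: induct_list012) auto

definition remove_nth :: "nat \<Rightarrow> 'a list \<Rightarrow> 'a list" where
  "remove_nth i t = take i t @ drop (Suc i) t"

lemma length_remove_nth: "i < length t \<Longrightarrow> length (remove_nth i t) = length t - 1"
  unfolding remove_nth_def by simp

lemma set_remove_nth_subset: "set (remove_nth i t) \<subseteq> set t"
  unfolding remove_nth_def by (auto dest: in_set_takeD in_set_dropD)

lemma remove_nth_remove_nth:
  assumes "i < j" "j < length t"
  shows "remove_nth (j - 1) (remove_nth i t) = remove_nth i (remove_nth j t)"
proof -
  let ?r = "drop (Suc i) t"
  have "t = take i t @ t ! i # ?r" using assms by (simp add: id_take_nth_drop)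
  also have "?r = take (j - Suc i) ?r @ ?r ! (j - Suc i) # drop (Suc (j - Suc i)) ?r"
    by (rule id_take_nth_drop) (use assms in simp)
  finally obtain a x b y c where t: "t = a @ x # b @ y # c" and "length a = i" "length b = j - Suc i"
    using assms by fastforce
  then have "j = length a + Suc (length b)" using assms by simp
  then show ?thesis using \<open>length a = i\<close> unfolding t remove_nth_def by simp
qed

lemma remove_nth_interior:
  assumes "0 < i" "Suc i < length t"
  obtains a p x q b where "t = a @ [p, x, q] @ b" "remove_nth i t = a @ [p, q] @ b"
    and "t ! (i - 1) = p" "t ! i = x" "t ! Suc i = q"
proof -
  obtain k where i: "i = Suc k" using assms(1) by (cases i) auto
  have "t = take k t @ [t ! k, t ! i, t ! Suc i] @ drop (Suc (Suc i)) t"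
    using assms unfolding i by (simp add: Cons_nth_drop_Suc)
  moreover have "remove_nth i t = take k t @ [t ! k, t ! Suc i] @ drop (Suc (Suc i)) t"
    using assms unfolding i remove_nth_def by (simp add: take_Suc_conv_app_nth Cons_nth_drop_Suc)
  ultimately show ?thesis using that i by simp
qed

lemma path_length_remove_nth:
  assumes "0 < i" "Suc i < length t"
  shows "path_length d (remove_nth i t)
    = path_length d t - d (t ! (i - 1)) (t ! i) - d (t ! i) (t ! Suc i) + d (t ! (i - 1)) (t ! Suc i)"
proof -
  obtain a p x q b where "t = a @ [p, x, q] @ b" "remove_nth i t = a @ [p, q] @ b"
    and "t ! (i - 1) = p" "t ! i = x" "t ! Suc i = q"
    using remove_nth_interior[OF assms] .
  then show ?thesis
    using path_length_append[of d a p "[x, q] @ b"] path_length_append[of d a p "[q] @ b"] by simp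
qed

lemma successively_remove_nth:
  assumes "0 < i" "Suc i < length t" "successively P t" "P (t ! (i - 1)) (t ! Suc i)"
  shows "successively P (remove_nth i t)"
proof -
  obtain a p x q b where "t = a @ [p, x, q] @ b" "remove_nth i t = a @ [p, q] @ b"
    and "t ! (i - 1) = p" "t ! i = x" "t ! Suc i = q"
    using remove_nth_interior[OF assms(1,2)] .
  then show ?thesis using assms(3,4) by (auto simp: successively_append_iff)
qed

lemma mag_gens_conv:
  "mag_gens X d n l
     = {t. length t = Suc n \<and> set t \<subseteq> X \<and> successively (\<noteq>) t \<and> path_length d t = l}"
  unfolding mag_gens_def path_length_conv_nth successively_conv_nth
  by (intro Collect_cong) auto


section \<open>The boundary of the magnitude complex\<close>

lemma quasi_metric_space_triangle:
  "quasi_metric_space X d \<Longrightarrow> x \<in> X \<Longrightarrow> y \<in> X \<Longrightarrow> z \<in> X \<Longrightarrow> d x z \<le> d x y + d y z"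
  unfolding quasi_metric_space_def by simp

lemma quasi_metric_space_zero: "quasi_metric_space X d \<Longrightarrow> x \<in> X \<Longrightarrow> d x x = 0"
  unfolding quasi_metric_space_def by simp

lemma quasi_metric_space_pos:
  "quasi_metric_space X d \<Longrightarrow> x \<in> X \<Longrightarrow> y \<in> X \<Longrightarrow> x \<noteq> y \<Longrightarrow> 0 < d x y"
  unfolding quasi_metric_space_def by simp

lemma quasi_metric_space_nonneg:
  "quasi_metric_space X d \<Longrightarrow> x \<in> X \<Longrightarrow> y \<in> X \<Longrightarrow> 0 \<le> d x y"
  using quasi_metric_space_zero[of X d x] quasi_metric_space_pos[of X d x y] by (cases "x = y") auto

text \<open>The face map \<open>d\<^sup>i\<close> of the magnitude complex is nonzero on \<open>t\<close> exactly when
  \<open>removable d t i\<close>.\<close>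

definition removable :: "('a \<Rightarrow> 'a \<Rightarrow> real) \<Rightarrow> 'a list \<Rightarrow> nat \<Rightarrow> bool" where
  "removable d t i \<longleftrightarrow> d (t ! (i - 1)) (t ! i) + d (t ! i) (t ! Suc i) = d (t ! (i - 1)) (t ! Suc i)"

lemma bd_coeff_conv:
  "bd_coeff d n t u = (\<Sum>i\<in>{1..n-1}. if removable d t i \<and> remove_nth i t = u then (-1) ^ i else 0)"
  unfolding bd_coeff_def removable_def remove_nth_def by simp

lemma
  assumes "quasi_metric_space X d" "set t \<subseteq> X" "0 < i" "Suc i < length t"
  shows path_length_remove_nth_le: "path_length d (remove_nth i t) \<le> path_length d t"
    and removable_iff_path_length_eq:
      "removable d t i \<longleftrightarrow> path_length d (remove_nth i t) = path_length d t"
proof -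
  have "t ! (i - 1) \<in> X" "t ! i \<in> X" "t ! Suc i \<in> X"
    using assms(2-4) by (auto intro!: subsetD[OF assms(2)])
  then have "d (t ! (i - 1)) (t ! Suc i) \<le> d (t ! (i - 1)) (t ! i) + d (t ! i) (t ! Suc i)"
    using quasi_metric_space_triangle[OF assms(1)] by blast
  then show "path_length d (remove_nth i t) \<le> path_length d t"
    and "removable d t i \<longleftrightarrow> path_length d (remove_nth i t) = path_length d t"
    unfolding removable_def path_length_remove_nth[OF assms(3,4)] by linarith+
qed

lemma removable_twice_iff:
  assumes q: "quasi_metric_space X d" and t: "set t \<subseteq> X"
    and "0 < i" "0 < j" "Suc j < length t" "Suc (Suc i) < length t"
  shows "removable d t j \<and> removable d (remove_nth j t) i
    \<longleftrightarrow> path_length d (remove_nth i (remove_nth j t)) = path_length d t"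
proof -
  have "set (remove_nth j t) \<subseteq> X" using order.trans[OF set_remove_nth_subset t] .
  moreover have "Suc i < length (remove_nth j t)" using assms(5,6) length_remove_nth[of j t] by simp
  ultimately have "path_length d (remove_nth i (remove_nth j t)) \<le> path_length d (remove_nth j t)"
    and "removable d (remove_nth j t) i
      \<longleftrightarrow> path_length d (remove_nth i (remove_nth j t)) = path_length d (remove_nth j t)"
    using path_length_remove_nth_le[OF q _ \<open>0 < i\<close>] removable_iff_path_length_eq[OF q _ \<open>0 < i\<close>]
    by blast+
  moreover have "path_length d (remove_nth j t) \<le> path_length d t"
    and "removable d t j \<longleftrightarrow> path_length d (remove_nth j t) = path_length d t"
    using path_length_remove_nth_le[OF q t] removable_iff_path_length_eq[OF q t] assms(4,5)
    by blast+
  ultimately show ?thesis by linarith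
qed

lemma finite_mag_gens: "finite X \<Longrightarrow> finite (mag_gens X d n l)"
  by (rule finite_subset[of _ "{t. set t \<subseteq> X \<and> length t = Suc n}"])
    (auto simp: mag_gens_def finite_lists_length_eq)

lemma remove_nth_mem_mag_gens:
  assumes q: "quasi_metric_space X d" and t: "t \<in> mag_gens X d n l"
    and i: "0 < i" "i < n" and "removable d t i"
  shows "remove_nth i t \<in> mag_gens X d (n - 1) l"
proof -
  have t': "length t = Suc n" "set t \<subseteq> X" "successively (\<noteq>) t" "path_length d t = l"
    using t unfolding mag_gens_conv by auto
  let ?p = "t ! (i - 1)" and ?x = "t ! i" and ?q = "t ! Suc i"
  have X: "?p \<in> X" "?x \<in> X" "?q \<in> X" using t' i by auto
  have "?p \<noteq> ?x" using t'(1,3) i successively_nth[of "(\<noteq>)" t "i - 1"] by simp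
  then have "0 < d ?p ?x" using quasi_metric_space_pos[OF q X(1,2)] by simp
  moreover have "0 \<le> d ?x ?p" using quasi_metric_space_nonneg[OF q X(2,1)] .
  ultimately have "?p \<noteq> ?q"
    using \<open>removable d t i\<close> quasi_metric_space_zero[OF q X(1)] unfolding removable_def by force
  then show ?thesis
    using t' i \<open>removable d t i\<close> set_remove_nth_subset[of i t]
      successively_remove_nth[of i t] removable_iff_path_length_eq[OF q t'(2), of i]
    unfolding mag_gens_conv by (auto simp: length_remove_nth)
qed

lemma mag_boundary_mem_mag_chains:
  assumes "quasi_metric_space X d"
  shows "mag_boundary X d (Suc n) l c \<in> mag_chains X d n l"
  unfolding mag_chains_def
proof (intro CollectI allI impI)
  fix u assume "mag_boundary X d (Suc n) l c u \<noteq> 0"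
  then obtain t where t: "t \<in> mag_gens X d (Suc n) l" and "bd_coeff d (Suc n) t u \<noteq> 0"
    unfolding mag_boundary_def by (auto elim!: sum.not_neutral_contains_not_neutral)
  then obtain i where "i \<in> {1..n}" "removable d t i" "remove_nth i t = u"
    unfolding bd_coeff_conv by (auto elim!: sum.not_neutral_contains_not_neutral split: if_splits)
  then show "u \<in> mag_gens X d n l" using remove_nth_mem_mag_gens[OF assms t] by auto
qed

text \<open>The terms of \<open>\<partial>\<partial>\<close> cancel in pairs along the simplicial identity
  \<open>d\<^sub>i d\<^sub>j = d\<^bsub>j-1\<^esub> d\<^sub>i\<close> for \<open>i < j\<close>.\<close>

lemma sum_faces_cancel:
  fixes f :: "nat \<Rightarrow> nat \<Rightarrow> 'b::ab_group_add"
  assumes "\<And>i j. 0 < i \<Longrightarrow> i < j \<Longrightarrow> j \<le> n \<Longrightarrow> f i (j - 1) = - f j i"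
  shows "(\<Sum>j\<in>{1..n}. \<Sum>i\<in>{1..n-1}. f j i) = 0"
proof -
  let ?S = "{1..n} \<times> {1..n-1}"
  let ?below = "{p\<in>?S. snd p < fst p}" and ?above = "{p\<in>?S. fst p \<le> snd p}"
  have "?S = ?below \<union> ?above" by auto
  then have "(\<Sum>j\<in>{1..n}. \<Sum>i\<in>{1..n-1}. f j i) = (\<Sum>p\<in>?below \<union> ?above. f (fst p) (snd p))"
    by (simp add: sum.cartesian_product case_prod_beta)
  also have "\<dots> = (\<Sum>p\<in>?below. f (fst p) (snd p)) + (\<Sum>p\<in>?above. f (fst p) (snd p))"
    by (rule sum.union_disjoint) auto
  also have "(\<Sum>p\<in>?above. f (fst p) (snd p)) = (\<Sum>p\<in>?below. f (snd p) (fst p - 1))"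
    by (rule sum.reindex_bij_witness[symmetric, where j = "\<lambda>p. (snd p, fst p - 1)"
          and i = "\<lambda>p. (snd p + 1, fst p)"]) auto
  also have "\<dots> = (\<Sum>p\<in>?below. - f (fst p) (snd p))"
  proof (rule sum.cong[OF refl])
    fix p assume "p \<in> ?below"
    then show "f (snd p) (fst p - 1) = - f (fst p) (snd p)" by (intro assms) auto
  qed
  finally show ?thesis by (simp add: sum_negf)
qed

lemma sum_bd_coeff_bd_coeff_eq_0:
  assumes q: "quasi_metric_space X d" and "finite X" and t: "t \<in> mag_gens X d (Suc n) l"
  shows "(\<Sum>u\<in>mag_gens X d n l. bd_coeff d (Suc n) t u * bd_coeff d n u v) = 0"
proof -
  let ?G = "mag_gens X d n l" and ?len = "path_length d"
  have t': "length t = Suc (Suc n)" "set t \<subseteq> X" using t unfolding mag_gens_conv by auto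
  \<comment> \<open>Faces never increase the length, so a double face survives iff it preserves the total
    length; unlike the removability conditions, this is invariant under the simplicial identity.\<close>
  define f where "f j i = (if ?len (remove_nth i (remove_nth j t)) = ?len t
      \<and> remove_nth i (remove_nth j t) = v then (-1) ^ j * (-1) ^ i else (0::rat))" for j i
  have "(\<Sum>u\<in>?G. bd_coeff d (Suc n) t u * bd_coeff d n u v)
      = (\<Sum>j\<in>{1..n}. \<Sum>u\<in>?G.
          if removable d t j \<and> remove_nth j t = u then (-1) ^ j * bd_coeff d n u v else 0)"
    unfolding bd_coeff_conv[of d "Suc n"] sum_distrib_right by (subst sum.swap) (simp add: if_distrib if_distribR cong: if_cong)
  also have "\<dots> = (\<Sum>j\<in>{1..n}. if removable d t j then (-1) ^ j * bd_coeff d n (remove_nth j t) v else 0)"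
    using remove_nth_mem_mag_gens[OF q t] finite_mag_gens[OF \<open>finite X\<close>]
    by (intro sum.cong refl) (auto simp: sum.delta)
  also have "\<dots> = (\<Sum>j\<in>{1..n}. \<Sum>i\<in>{1..n-1}. f j i)"
  proof (rule sum.cong[OF refl])
    fix j assume j: "j \<in> {1..n}"
    have "removable d t j \<and> removable d (remove_nth j t) i
        \<longleftrightarrow> ?len (remove_nth i (remove_nth j t)) = ?len t"
      if "i \<in> {1..n-1}" for i
      using that j t'(1) by (intro removable_twice_iff[OF q t'(2)]) auto
    then show "(if removable d t j then (-1) ^ j * bd_coeff d n (remove_nth j t) v else 0) = (\<Sum>i\<in>{1..n-1}. f j i)"
      unfolding bd_coeff_conv f_def sum_distrib_left by (auto intro: sum.cong simp: sum.neutral)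
  qed
  also have "\<dots> = 0"
  proof (rule sum_faces_cancel)
    fix i j assume "0 < i" "i < j" "j \<le> n"
    then have "remove_nth (j - 1) (remove_nth i t) = remove_nth i (remove_nth j t)"
      and "(-1::rat) ^ i * (-1) ^ (j - 1) = - ((-1) ^ j * (-1) ^ i)"
      using remove_nth_remove_nth[of i j t] t'(1) by (auto simp: power_eq_if)
    then show "f i (j - 1) = - f j i" unfolding f_def by auto
  qed
  finally show ?thesis .
qed

lemma mag_boundary_mag_boundary:
  assumes "quasi_metric_space X d" "finite X"
  shows "mag_boundary X d n l (mag_boundary X d (Suc n) l c) = (\<lambda>_. 0)"
proof
  fix v
  have "mag_boundary X d n l (mag_boundary X d (Suc n) l c) v = (\<Sum>t\<in>mag_gens X d (Suc n) l.
      c t * (\<Sum>u\<in>mag_gens X d n l. bd_coeff d (Suc n) t u * bd_coeff d n u v))"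
    unfolding mag_boundary_def sum_distrib_left sum_distrib_right
    by (subst sum.swap) (simp add: mult.assoc)
  then show "mag_boundary X d n l (mag_boundary X d (Suc n) l c) v = 0"
    using sum_bd_coeff_bd_coeff_eq_0[OF assms] by simp
qed


section \<open>Euler characteristic of the magnitude complex\<close>

interpretation rational_chains: vector_space "rat_scale :: rat \<Rightarrow> ('a list \<Rightarrow> rat) \<Rightarrow> _"
  by unfold_locales (auto simp: rat_scale_def fun_eq_iff algebra_simps)

lemma sum_apply: "(\<Sum>i\<in>S. f i) x = (\<Sum>i\<in>S. f i x)"
  by (induction S rule: infinite_finite_induct) auto

definition unit_chain :: "'a list \<Rightarrow> 'a list \<Rightarrow> rat" where
  "unit_chain t = (\<lambda>u. if u = t then 1 else 0)"

lemma inj_unit_chain: "inj unit_chain"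
  unfolding unit_chain_def inj_def by (metis zero_neq_one)

lemma independent_unit_chains:
  assumes "finite T"
  shows "rational_chains.independent (unit_chain ` T)"
proof (rule rational_chains.independent_if_scalars_zero)
  fix c x assume sum: "(\<Sum>x\<in>unit_chain ` T. rat_scale (c x) x) = 0" and "x \<in> unit_chain ` T"
  then obtain t where t: "t \<in> T" "x = unit_chain t" by auto
  have "(\<Sum>x\<in>unit_chain ` T. rat_scale (c x) x) = (\<Sum>s\<in>T. rat_scale (c (unit_chain s)) (unit_chain s))"
    by (rule sum.reindex_cong[OF _ refl refl]) (rule inj_on_subset[OF inj_unit_chain subset_UNIV])
  then have "0 = (\<Sum>s\<in>T. rat_scale (c (unit_chain s)) (unit_chain s)) t"
    using sum by simp
  also have "\<dots> = c x"
    using t assms by (simp add: sum_apply rat_scale_def unit_chain_def if_distrib cong: if_cong)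
  finally show "c x = 0" ..
qed (use assms in simp)

lemma mag_chains_subset_span:
  assumes "finite X"
  shows "mag_chains X d n l \<subseteq> rational_chains.span (unit_chain ` mag_gens X d n l)"
proof
  fix c assume c: "c \<in> mag_chains X d n l"
  have "c = (\<Sum>t\<in>mag_gens X d n l. rat_scale (c t) (unit_chain t))"
    using c finite_mag_gens[OF assms] unfolding mag_chains_def
    by (auto simp: fun_eq_iff sum_apply rat_scale_def unit_chain_def if_distrib sum.delta cong: if_cong)
  also have "\<dots> \<in> rational_chains.span (unit_chain ` mag_gens X d n l)"
    by (intro rational_chains.span_sum rational_chains.span_scale rational_chains.span_base) auto
  finally show "c \<in> rational_chains.span (unit_chain ` mag_gens X d n l)" .
qed

lemma dim_mag_chains:
  assumes "finite X"
  shows "rational_chains.dim (mag_chains X d n l) = card (mag_gens X d n l)"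
proof -
  let ?B = "unit_chain ` mag_gens X d n l"
  have "?B \<subseteq> mag_chains X d n l" unfolding mag_chains_def unit_chain_def by (auto split: if_splits)
  from rational_chains.basis_card_eq_dim[OF this mag_chains_subset_span[OF assms]
      independent_unit_chains[OF finite_mag_gens[OF assms]]]
  have "rational_chains.dim (mag_chains X d n l) = card ?B" ..
  also have "\<dots> = card (mag_gens X d n l)" by (rule card_image[OF inj_on_subset[OF inj_unit_chain]]) simp
  finally show ?thesis .
qed

lemma subspace_mag_chains: "rational_chains.subspace (mag_chains X d n l)"
  unfolding rational_chains.subspace_def mag_chains_def rat_scale_def by auto (metis add_0)

lemma module_hom_mag_boundary: "module_hom rat_scale rat_scale (mag_boundary X d n l)"
  using rational_chains.vector_space_axioms unfolding module_hom_iff module_iff_vector_space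
  by (auto simp: mag_boundary_def rat_scale_def fun_eq_iff sum.distrib sum_distrib_left algebra_simps)

lemma card_mag_gens_eq_dim_cycles_plus_dim_image:
  assumes "finite X"
  shows "card (mag_gens X d n l) = rational_chains.dim (mag_cycles X d n l)
    + rational_chains.dim (mag_boundary X d n l ` mag_chains X d n l)"
  using rational_chains.dim_kernel_plus_dim_image[OF module_hom_mag_boundary subspace_mag_chains
      mag_chains_subset_span[OF assms] finite_imageI[OF finite_mag_gens[OF assms]]]
  unfolding dim_mag_chains[OF assms] mag_cycles_def zero_fun_def by simp

lemma dim_mag_boundaries_le_dim_mag_cycles:
  assumes "quasi_metric_space X d" "finite X"
  shows "rational_chains.dim (mag_boundaries X d n l) \<le> rational_chains.dim (mag_cycles X d n l)"
proof (rule rational_chains.dim_subset_finitely_spanned)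
  show "mag_boundaries X d n l \<subseteq> mag_cycles X d n l"
    unfolding mag_boundaries_def mag_cycles_def
    using mag_boundary_mem_mag_chains[OF assms(1)] mag_boundary_mag_boundary[OF assms] by blast
  show "mag_cycles X d n l \<subseteq> rational_chains.span (unit_chain ` mag_gens X d n l)"
    using mag_chains_subset_span[OF assms(2)] unfolding mag_cycles_def by blast
qed (use finite_mag_gens[OF assms(2)] in simp)

lemma euler_poincare_truncated:
  fixes z b c :: "nat \<Rightarrow> nat"
  assumes "\<And>n. c n = z n + b n" "\<And>n. b (Suc n) \<le> z n"
  shows "(\<Sum>n<N. (-1) ^ n * of_nat (z n - b (Suc n)) :: 'a::comm_ring_1)
    = (\<Sum>n<N. (-1) ^ n * of_nat (c n)) - of_nat (b 0) + (-1) ^ N * of_nat (b N)"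
proof (induction N)
  case (Suc N)
  have z: "of_nat (z N - b (Suc N)) = (of_nat (c N) - of_nat (b N) - of_nat (b (Suc N)) :: 'a)"
    using assms[of N] by (simp add: of_nat_diff)
  show ?case unfolding sum.lessThan_Suc Suc.IH z by (simp add: algebra_simps)
qed simp

lemma alternating_sum_HM_rank:
  assumes "quasi_metric_space X d" "finite X" "mag_gens X d N l = {}"
  shows "(\<Sum>n<N. (-1) ^ n * HM_rank_series X d n l) = (\<Sum>n<N. (-1) ^ n * of_nat (card (mag_gens X d n l)))"
proof -
  define z where "z n = rational_chains.dim (mag_cycles X d n l)" for n
  define b where "b n = rational_chains.dim (mag_boundary X d n l ` mag_chains X d n l)" for n
  have "mag_boundary X d 0 l ` mag_chains X d 0 l = {0}"
    unfolding mag_boundary_def bd_coeff_def mag_chains_def by (auto simp: zero_fun_def)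
  then have "b 0 = 0"
    using rational_chains.basis_card_eq_dim[of "{}" "{0}"] unfolding b_def
    by (simp add: rational_chains.span_empty rational_chains.independent_empty)
  moreover have "b N = 0"
    using card_mag_gens_eq_dim_cycles_plus_dim_image[OF assms(2), of d N l] assms(3) by (simp add: b_def)
  ultimately show ?thesis
    using euler_poincare_truncated[of "\<lambda>n. card (mag_gens X d n l)" z b N]
      card_mag_gens_eq_dim_cycles_plus_dim_image[OF assms(2)] dim_mag_boundaries_le_dim_mag_cycles[OF assms(1,2)]
    unfolding HM_rank_series_def HM_rank_def z_def b_def mag_boundaries_def by simp
qed


definition mag_paths :: "'a set \<Rightarrow> ('a \<Rightarrow> 'a \<Rightarrow> real) \<Rightarrow> nat \<Rightarrow> 'a \<Rightarrow> 'a \<Rightarrow> real \<Rightarrow> 'a list set" where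
  "mag_paths X d n x z l = {t \<in> mag_gens X d n l. hd t = x \<and> last t = z}"

lemma card_mag_gens_eq_sum_card_mag_paths:
  assumes "finite X"
  shows "card (mag_gens X d n l) = (\<Sum>x\<in>X. \<Sum>z\<in>X. card (mag_paths X d n x z l))"
proof -
  have "(\<lambda>t. (hd t, last t)) ` mag_gens X d n l \<subseteq> X \<times> X"
    unfolding mag_gens_conv by (auto intro!: hd_in_set last_in_set)
  then have "card (mag_gens X d n l)
      = (\<Sum>p\<in>X \<times> X. card {t \<in> mag_gens X d n l. (hd t, last t) = p})"
    using sum.group[of "mag_gens X d n l" "X \<times> X" "\<lambda>t. (hd t, last t)" "\<lambda>_. 1::nat"]
      finite_mag_gens[OF assms] assms by simp
  then show ?thesis unfolding mag_paths_def sum.cartesian_product by (simp add: split_beta prod_eq_iff)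
qed

lemma mag_paths_0:
  "x \<in> X \<Longrightarrow> mag_paths X d 0 x z l = (if x = z \<and> l = 0 then {[x]} else {})"
  unfolding mag_paths_def mag_gens_conv by (auto simp: length_Suc_conv)

lemma mag_paths_Suc:
  assumes "x \<in> X"
  shows "mag_paths X d (Suc n) x z l = (\<Union>y\<in>X - {x}. (#) x ` mag_paths X d n y z (l - d x y))"
proof (intro equalityI subsetI)
  fix t assume "t \<in> mag_paths X d (Suc n) x z l"
  then have t: "length t = Suc (Suc n)" "set t \<subseteq> X" "successively (\<noteq>) t" "path_length d t = l"
    "hd t = x" "last t = z"
    unfolding mag_paths_def mag_gens_conv by auto
  then obtain y r where yr: "t = x # y # r" by (metis length_Suc_conv list.sel(1))
  then have "y # r \<in> mag_paths X d n y z (l - d x y)" "y \<in> X - {x}"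
    using t unfolding mag_paths_def mag_gens_conv by auto
  then show "t \<in> (\<Union>y\<in>X - {x}. (#) x ` mag_paths X d n y z (l - d x y))" unfolding yr by blast
next
  fix t assume "t \<in> (\<Union>y\<in>X - {x}. (#) x ` mag_paths X d n y z (l - d x y))"
  then obtain y s where t: "t = x # s" "y \<in> X - {x}" "s \<in> mag_paths X d n y z (l - d x y)" by blast
  then obtain r where "s = y # r" unfolding mag_paths_def mag_gens_conv by (cases s) auto
  then show "t \<in> mag_paths X d (Suc n) x z l"
    using t assms unfolding mag_paths_def mag_gens_conv by auto
qed

lemma card_mag_paths_Suc:
  assumes "finite X" "x \<in> X"
  shows "card (mag_paths X d (Suc n) x z l) = (\<Sum>y\<in>X - {x}. card (mag_paths X d n y z (l - d x y)))"
proof -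
  have fin: "finite (mag_paths X d n y z l')" for y l'
    using finite_mag_gens[OF assms(1)] unfolding mag_paths_def by simp
  have "hd t = y" if "t \<in> mag_paths X d n y z l'" for t y l'
    using that unfolding mag_paths_def by simp
  then have "(#) x ` mag_paths X d n y z (l - d x y) \<inter> (#) x ` mag_paths X d n y' z (l - d x y') = {}"
    if "y \<noteq> y'" for y y'
    using that by blast
  then show ?thesis
    unfolding mag_paths_Suc[OF assms(2)] using assms(1) fin
    by (subst card_UN_disjoint) (auto simp: card_image)
qed

lemma sum_delta_conj:
  assumes "finite S"
  shows "(\<Sum>y\<in>S. if y = a \<and> P y then c else 0) = (if a \<in> S \<and> P a then c else 0)"
proof -
  have "(\<Sum>y\<in>S. if y = a \<and> P y then c else 0) = (\<Sum>y\<in>S. if y = a then (if P a then c else 0) else 0)"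
    by (rule sum.cong) auto
  then show ?thesis using assms by (simp add: sum.delta)
qed

lemma card_mag_paths_Suc_right:
  assumes "finite X" "x \<in> X" "z \<in> X"
  shows "card (mag_paths X d (Suc n) x z l) = (\<Sum>y\<in>X - {z}. card (mag_paths X d n x y (l - d y z)))"
  using assms(2,3)
proof (induction n arbitrary: x l)
  case 0
  have "card (mag_paths X d (Suc 0) x z l) = (\<Sum>y\<in>X - {x}. if y = z \<and> l = d x y then 1 else 0)"
    using 0 by (simp add: card_mag_paths_Suc[OF assms(1)] mag_paths_0 if_distrib cong: if_cong)
  also have "\<dots> = (\<Sum>y\<in>X - {z}. if y = x \<and> l = d y z then 1 else 0)"
    using 0 assms(1) by (auto simp: sum_delta_conj)
  also have "\<dots> = (\<Sum>y\<in>X - {z}. card (mag_paths X d 0 x y (l - d y z)))"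
    using 0 by (intro sum.cong) (auto simp: mag_paths_0)
  finally show ?case .
next
  case (Suc n)
  have "card (mag_paths X d (Suc (Suc n)) x z l)
      = (\<Sum>y\<in>X - {x}. \<Sum>w\<in>X - {z}. card (mag_paths X d n y w (l - d x y - d w z)))"
    using Suc by (simp add: card_mag_paths_Suc[OF assms(1)])
  also have "\<dots> = (\<Sum>w\<in>X - {z}. \<Sum>y\<in>X - {x}. card (mag_paths X d n y w (l - d w z - d x y)))"
    by (subst sum.swap) (simp add: algebra_simps)
  also have "\<dots> = (\<Sum>w\<in>X - {z}. card (mag_paths X d (Suc n) x w (l - d w z)))"
    using Suc by (simp add: card_mag_paths_Suc[OF assms(1)])
  finally show ?case .
qed


section \<open>The inverse of the similarity matrix\<close>

definition uniformly_discrete :: "'a set \<Rightarrow> ('a \<Rightarrow> 'a \<Rightarrow> real) \<Rightarrow> real \<Rightarrow> bool" where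
  "uniformly_discrete X d \<delta> \<longleftrightarrow> 0 < \<delta> \<and> (\<forall>x\<in>X. \<forall>y\<in>X. x \<noteq> y \<longrightarrow> \<delta> \<le> d x y)"

lemma finite_quasi_metric_space_uniformly_discrete:
  assumes "finite X" "quasi_metric_space X d"
  obtains \<delta> where "uniformly_discrete X d \<delta>"
proof -
  let ?D = "insert 1 {d x y |x y. x \<in> X \<and> y \<in> X \<and> x \<noteq> y}"
  have "finite ?D"
    by (rule finite_subset[of _ "insert 1 ((\<lambda>(x, y). d x y) ` (X \<times> X))"]) (use assms(1) in auto)
  moreover have "0 < a" if "a \<in> ?D" for a
    using that quasi_metric_space_pos[OF assms(2)] by auto
  ultimately have "uniformly_discrete X d (Min ?D)"
    unfolding uniformly_discrete_def by (auto intro: Min_le)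
  then show ?thesis by (rule that)
qed

definition degree_bound :: "real \<Rightarrow> real \<Rightarrow> nat" where
  "degree_bound \<delta> l = nat \<lfloor>l / \<delta>\<rfloor> + 1"

lemma less_degree_bound: "0 < \<delta> \<Longrightarrow> degree_bound \<delta> l \<le> n \<Longrightarrow> l < real n * \<delta>"
  unfolding degree_bound_def by (simp add: pos_divide_less_eq[symmetric]) linarith

lemma degree_bound_mono: "0 < \<delta> \<Longrightarrow> l \<le> l' \<Longrightarrow> degree_bound \<delta> l \<le> degree_bound \<delta> l'"
  unfolding degree_bound_def by (simp add: divide_right_mono floor_mono nat_mono)

lemma mag_gens_eq_empty:
  assumes "uniformly_discrete X d \<delta>" "degree_bound \<delta> l \<le> n"
  shows "mag_gens X d n l = {}"
proof (rule ccontr)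
  assume "mag_gens X d n l \<noteq> {}"
  then obtain t where t: "length t = Suc n" "set t \<subseteq> X" "successively (\<noteq>) t" "path_length d t = l"
    unfolding mag_gens_conv by auto
  have "real n * \<delta> = (\<Sum>i<n. \<delta>)" by simp
  also have "\<dots> \<le> (\<Sum>i<n. d (t ! i) (t ! Suc i))"
  proof (rule sum_mono)
    fix i assume "i \<in> {..<n}"
    then have "t ! i \<in> X" "t ! Suc i \<in> X" "t ! i \<noteq> t ! Suc i"
      using t(1,3) successively_nth[OF t(3)] by (auto intro!: subsetD[OF t(2)])
    then show "\<delta> \<le> d (t ! i) (t ! Suc i)" using assms(1) unfolding uniformly_discrete_def by blast
  qed
  also have "\<dots> = l" using t(1,4) by (simp add: path_length_conv_nth)
  finally show False
    using less_degree_bound[OF _ assms(2)] assms(1) unfolding uniformly_discrete_def by simp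
qed

text \<open>The \<open>(x, z)\<close> entry of \<open>\<Sum>\<^sub>n (-1)\<^sup>n (Z - I)\<^sup>n\<close>, truncated at the
  degree beyond which all terms vanish in grading \<open>l\<close>.\<close>

definition mag_inverse :: "'a set \<Rightarrow> ('a \<Rightarrow> 'a \<Rightarrow> real) \<Rightarrow> real \<Rightarrow> 'a \<Rightarrow> 'a \<Rightarrow> real \<Rightarrow> rat" where
  "mag_inverse X d \<delta> x z l = (\<Sum>n<degree_bound \<delta> l. (-1) ^ n * of_nat (card (mag_paths X d n x z l)))"

lemma mag_inverse_eq_sum:
  assumes "uniformly_discrete X d \<delta>" "degree_bound \<delta> l \<le> N"
  shows "mag_inverse X d \<delta> x z l = (\<Sum>n<N. (-1) ^ n * of_nat (card (mag_paths X d n x z l)))"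
  unfolding mag_inverse_def
proof (rule sum.mono_neutral_left)
  show "\<forall>n\<in>{..<N} - {..<degree_bound \<delta> l}. (-1) ^ n * of_nat (card (mag_paths X d n x z l)) = (0::rat)"
    using mag_gens_eq_empty[OF assms(1)] unfolding mag_paths_def by auto
qed (use assms(2) in auto)

lemma alternating_sum_telescope:
  fixes p s :: "nat \<Rightarrow> 'a::comm_ring_1"
  assumes "\<And>n. s n = p n + p (Suc n)" "p N = 0"
  shows "(\<Sum>n<N. (-1) ^ n * s n) = p 0"
  using sum_lessThan_telescope'[of "\<lambda>n. (-1) ^ n * p n" N] assms by (simp add: algebra_simps)

lemma sum_mag_inverse_left:
  assumes "finite X" "quasi_metric_space X d" "uniformly_discrete X d \<delta>" "x \<in> X" "z \<in> X"
  shows "(\<Sum>y\<in>X. mag_inverse X d \<delta> y z (l - d x y)) = (if x = z \<and> l = 0 then 1 else 0)"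
proof -
  let ?N = "degree_bound \<delta> l" and ?p = "\<lambda>n. of_nat (card (mag_paths X d n x z l)) :: rat"
  have "degree_bound \<delta> (l - d x y) \<le> ?N" if "y \<in> X" for y
    using degree_bound_mono quasi_metric_space_nonneg[OF assms(2,4) that] assms(3)
    unfolding uniformly_discrete_def by simp
  then have "(\<Sum>y\<in>X. mag_inverse X d \<delta> y z (l - d x y))
      = (\<Sum>y\<in>X. \<Sum>n<?N. (-1) ^ n * of_nat (card (mag_paths X d n y z (l - d x y))))"
    by (intro sum.cong refl mag_inverse_eq_sum[OF assms(3)])
  also have "\<dots> = (\<Sum>n<?N. (-1) ^ n * (\<Sum>y\<in>X. of_nat (card (mag_paths X d n y z (l - d x y)))))"
    by (subst sum.swap) (simp add: sum_distrib_left)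
  also have "\<dots> = ?p 0"
  proof (rule alternating_sum_telescope)
    show "(\<Sum>y\<in>X. of_nat (card (mag_paths X d n y z (l - d x y)))) = ?p n + ?p (Suc n)" for n
      using quasi_metric_space_zero[OF assms(2,4)]
      by (subst sum.remove[OF assms(1,4)]) (simp add: card_mag_paths_Suc[OF assms(1,4)])
    show "?p ?N = 0" using mag_gens_eq_empty[OF assms(3) order_refl] unfolding mag_paths_def by simp
  qed
  also have "\<dots> = (if x = z \<and> l = 0 then 1 else 0)" using assms(4) by (simp add: mag_paths_0)
  finally show ?thesis .
qed

lemma sum_mag_inverse_right:
  assumes "finite X" "quasi_metric_space X d" "uniformly_discrete X d \<delta>" "x \<in> X" "z \<in> X"
  shows "(\<Sum>y\<in>X. mag_inverse X d \<delta> x y (l - d y z)) = (if x = z \<and> l = 0 then 1 else 0)"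
proof -
  let ?N = "degree_bound \<delta> l" and ?p = "\<lambda>n. of_nat (card (mag_paths X d n x z l)) :: rat"
  have "degree_bound \<delta> (l - d y z) \<le> ?N" if "y \<in> X" for y
    using degree_bound_mono quasi_metric_space_nonneg[OF assms(2) that assms(5)] assms(3)
    unfolding uniformly_discrete_def by simp
  then have "(\<Sum>y\<in>X. mag_inverse X d \<delta> x y (l - d y z))
      = (\<Sum>y\<in>X. \<Sum>n<?N. (-1) ^ n * of_nat (card (mag_paths X d n x y (l - d y z))))"
    by (intro sum.cong refl mag_inverse_eq_sum[OF assms(3)])
  also have "\<dots> = (\<Sum>n<?N. (-1) ^ n * (\<Sum>y\<in>X. of_nat (card (mag_paths X d n x y (l - d y z)))))"
    by (subst sum.swap) (simp add: sum_distrib_left)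
  also have "\<dots> = ?p 0"
  proof (rule alternating_sum_telescope)
    show "(\<Sum>y\<in>X. of_nat (card (mag_paths X d n x y (l - d y z)))) = ?p n + ?p (Suc n)" for n
      using quasi_metric_space_zero[OF assms(2,5)]
      by (subst sum.remove[OF assms(1,5)]) (simp add: card_mag_paths_Suc_right[OF assms(1,4,5)])
    show "?p ?N = 0" using mag_gens_eq_empty[OF assms(3) order_refl] unfolding mag_paths_def by simp
  qed
  also have "\<dots> = (if x = z \<and> l = 0 then 1 else 0)" using assms(4) by (simp add: mag_paths_0)
  finally show ?thesis .
qed


section \<open>Uniqueness of the inverse\<close>

lemma hahn_mult_qpow_left: "hahn_mult (qpow a) g l = g (l - a)"
proof -
  have "{b. qpow a b \<noteq> 0 \<and> g (l - b) \<noteq> 0} = (if g (l - a) = 0 then {} else {a})"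
    unfolding qpow_def by auto
  then show ?thesis unfolding hahn_mult_def by (simp add: qpow_def)
qed

lemma hahn_mult_qpow_right: "hahn_mult f (qpow a) l = f (l - a)"
proof -
  have "{b. f b \<noteq> 0 \<and> qpow a (l - b) \<noteq> 0} = (if f (l - a) = 0 then {} else {l - a})"
    unfolding qpow_def by auto
  then show ?thesis unfolding hahn_mult_def by (simp add: qpow_def)
qed

lemma hahn_if_locally_finite:
  assumes "\<And>s. finite {a. f a \<noteq> 0 \<and> a \<le> s}"
  shows "hahn f"
  unfolding hahn_def
proof (intro allI impI)
  fix S assume S: "S \<subseteq> {a. f a \<noteq> 0}" "S \<noteq> {}"
  then obtain s where "s \<in> S" by blast
  let ?T = "{a \<in> S. a \<le> s}"
  have fin: "finite ?T" using S(1) by (auto intro: finite_subset[OF _ assms[of s]])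
  have "Min ?T \<in> S" using Min_in[OF fin] \<open>s \<in> S\<close> by auto
  moreover have "Min ?T \<le> a" if "a \<in> S" for a
  proof (cases "a \<le> s")
    case True
    then show ?thesis using Min_le[OF fin] that by simp
  next
    case False
    then show ?thesis using Min_le[OF fin, of s] \<open>s \<in> S\<close> by simp
  qed
  ultimately show "\<exists>m\<in>S. \<forall>a\<in>S. m \<le> a" by blast
qed

lemma hahn_bdd_below:
  assumes "hahn f"
  obtains m where "\<And>a. f a \<noteq> 0 \<Longrightarrow> m \<le> a"
proof (cases "\<exists>a. f a \<noteq> 0")
  case True
  then obtain m where "\<forall>a\<in>{a. f a \<noteq> 0}. m \<le> a"
    using assms[unfolded hahn_def, rule_format, of "{a. f a \<noteq> 0}"] by auto
  then show ?thesis using that by blast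
qed (use that in auto)

lemma hahn_mag_inverse:
  assumes "finite X" "uniformly_discrete X d \<delta>"
  shows "hahn (mag_inverse X d \<delta> x y)"
proof (rule hahn_if_locally_finite)
  fix s
  have "{a. mag_inverse X d \<delta> x y a \<noteq> 0 \<and> a \<le> s}
      \<subseteq> (\<Union>n<degree_bound \<delta> s. path_length d ` {t. set t \<subseteq> X \<and> length t = Suc n})"
  proof
    fix a assume a: "a \<in> {a. mag_inverse X d \<delta> x y a \<noteq> 0 \<and> a \<le> s}"
    then obtain n where n: "n < degree_bound \<delta> a" "mag_paths X d n x y a \<noteq> {}"
      unfolding mag_inverse_def by (auto simp: card_gt_0_iff elim!: sum.not_neutral_contains_not_neutral)
    then obtain t where "t \<in> mag_gens X d n a" unfolding mag_paths_def by auto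
    then have "a = path_length d t" "t \<in> {t. set t \<subseteq> X \<and> length t = Suc n}"
      unfolding mag_gens_conv by auto
    moreover have "n < degree_bound \<delta> s"
      using n(1) degree_bound_mono[of \<delta> a s] a assms(2) unfolding uniformly_discrete_def by simp
    ultimately show "a \<in> (\<Union>n<degree_bound \<delta> s. path_length d ` {t. set t \<subseteq> X \<and> length t = Suc n})"
      by blast
  qed
  moreover have "finite (\<Union>n<degree_bound \<delta> s. path_length d ` {t. set t \<subseteq> X \<and> length t = Suc n})"
    using assms(1) by (simp add: finite_lists_length_eq)
  ultimately show "finite {a. mag_inverse X d \<delta> x y a \<noteq> 0 \<and> a \<le> s}" by (rule finite_subset)
qed

lemma is_inverse_of_Z_mag_inverse:
  assumes "finite X" "quasi_metric_space X d" "uniformly_discrete X d \<delta>"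
  shows "is_inverse_of_Z X d (mag_inverse X d \<delta>)"
  unfolding is_inverse_of_Z_def
proof (intro conjI ballI ext)
  fix x y show "hahn (mag_inverse X d \<delta> x y)" by (rule hahn_mag_inverse[OF assms(1,3)])
next
  fix x z l assume "x \<in> X" "z \<in> X"
  then show "(\<Sum>y\<in>X. hahn_mult (similarity_matrix d x y) (mag_inverse X d \<delta> y z) l)
      = (if x = z then qpow 0 else (\<lambda>_. 0)) l"
    unfolding similarity_matrix_def hahn_mult_qpow_left using sum_mag_inverse_left[OF assms] by (simp add: qpow_def)
next
  fix x z l assume "x \<in> X" "z \<in> X"
  then show "(\<Sum>y\<in>X. hahn_mult (mag_inverse X d \<delta> x y) (similarity_matrix d y z) l)
      = (if x = z then qpow 0 else (\<lambda>_. 0)) l"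
    unfolding similarity_matrix_def hahn_mult_qpow_right using sum_mag_inverse_right[OF assms] by (simp add: qpow_def)
qed

text \<open>Since off-diagonal distances are at least \<open>\<delta>\<close>, the equation at \<open>z\<close> determines
  \<open>C z l\<close> from values of \<open>C\<close> in gradings at most \<open>l - \<delta>\<close>; induct on the number of
  \<open>\<delta>\<close>-steps above a common lower bound of the supports.\<close>

lemma eq_0_if_times_similarity_eq_0:
  fixes C :: "'a \<Rightarrow> real \<Rightarrow> rat"
  assumes "finite X" "quasi_metric_space X d" "uniformly_discrete X d \<delta>"
    and C: "\<And>z l. z \<in> X \<Longrightarrow> (\<Sum>y\<in>X. C y (l - d y z)) = 0"
    and bdd: "\<And>y. y \<in> X \<Longrightarrow> \<exists>m. \<forall>a. C y a \<noteq> 0 \<longrightarrow> m \<le> a"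
    and "z \<in> X"
  shows "C z l = 0"
proof -
  obtain M where M: "\<And>y a. y \<in> X \<Longrightarrow> C y a \<noteq> 0 \<Longrightarrow> M y \<le> a" using bdd by metis
  define m where "m = Min (M ` X)"
  have below_m: "C y a = 0" if "y \<in> X" "a < m" for y a
    using M[OF that(1)] Min_le[OF finite_imageI[OF assms(1)], of "M y"] that unfolding m_def by force
  have \<delta>: "0 < \<delta>" "\<And>x y. x \<in> X \<Longrightarrow> y \<in> X \<Longrightarrow> x \<noteq> y \<Longrightarrow> \<delta> \<le> d x y"
    using assms(3) unfolding uniformly_discrete_def by auto
  have "\<forall>l. l < m + real n * \<delta> \<longrightarrow> (\<forall>z\<in>X. C z l = 0)" for n
  proof (induction n)
    case (Suc n)
    show ?case
    proof (intro allI impI ballI)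
      fix l z assume l: "l < m + real (Suc n) * \<delta>" and z: "z \<in> X"
      have "C y (l - d y z) = 0" if "y \<in> X - {z}" for y
        using Suc.IH \<delta>(2)[of y z] that z l by (auto simp: algebra_simps)
      then have "(\<Sum>y\<in>X. C y (l - d y z)) = C z l"
        using quasi_metric_space_zero[OF assms(2) z] by (simp add: sum.remove[OF assms(1) z])
      then show "C z l = 0" using C[OF z] by simp
    qed
  qed (use below_m in simp)
  moreover obtain n where "l - m < real n * \<delta>" using ex_less_of_nat_mult[OF \<delta>(1)] by blast
  then have "l < m + real n * \<delta>" by simp
  ultimately show ?thesis using \<open>z \<in> X\<close> by blast
qed

lemma inverse_of_Z_eq_mag_inverse:
  assumes "finite X" "quasi_metric_space X d" "uniformly_discrete X d \<delta>" and W: "is_inverse_of_Z X d W"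
    and "x \<in> X" "w \<in> X"
  shows "W x w l = mag_inverse X d \<delta> x w l"
proof -
  have "(\<Sum>y\<in>X. W x y (l - d y z)) = (if x = z \<and> l = 0 then 1 else 0)" if "z \<in> X" for z l
  proof -
    have "(\<lambda>l. \<Sum>y\<in>X. hahn_mult (W x y) (similarity_matrix d y z) l)
        = (if x = z then qpow 0 else (\<lambda>_. 0))"
      using W \<open>x \<in> X\<close> that unfolding is_inverse_of_Z_def by blast
    then show ?thesis
      unfolding similarity_matrix_def hahn_mult_qpow_right by (auto simp: fun_eq_iff qpow_def)
  qed
  then have "(\<Sum>y\<in>X. W x y (l - d y z) - mag_inverse X d \<delta> x y (l - d y z)) = 0" if "z \<in> X" for z l
    using sum_mag_inverse_right[OF assms(1-3) \<open>x \<in> X\<close> that] that by (simp add: sum_subtractf)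
  moreover have "\<exists>m. \<forall>a. W x y a - mag_inverse X d \<delta> x y a \<noteq> 0 \<longrightarrow> m \<le> a" if "y \<in> X" for y
  proof -
    have "hahn (W x y)" using W \<open>x \<in> X\<close> that unfolding is_inverse_of_Z_def by blast
    then obtain m1 where m1: "\<And>a. W x y a \<noteq> 0 \<Longrightarrow> m1 \<le> a" using hahn_bdd_below by blast
    obtain m2 where m2: "\<And>a. mag_inverse X d \<delta> x y a \<noteq> 0 \<Longrightarrow> m2 \<le> a"
      using hahn_bdd_below[OF hahn_mag_inverse[OF assms(1,3)]] by blast
    have "min m1 m2 \<le> a" if "W x y a - mag_inverse X d \<delta> x y a \<noteq> 0" for a
      using that m1[of a] m2[of a] by (cases "W x y a = 0") (auto simp: min_le_iff_disj)
    then show ?thesis by blast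
  qed
  ultimately have "W x w l - mag_inverse X d \<delta> x w l = 0"
    by (rule eq_0_if_times_similarity_eq_0[where C = "\<lambda>y a. W x y a - mag_inverse X d \<delta> x y a",
          OF assms(1-3) _ _ \<open>w \<in> X\<close>])
  then show ?thesis by simp
qed

lemma magnitude_eq_sum_mag_inverse:
  assumes "finite X" "quasi_metric_space X d" "uniformly_discrete X d \<delta>"
  shows "magnitude X d = (\<lambda>l. \<Sum>x\<in>X. \<Sum>y\<in>X. mag_inverse X d \<delta> x y l)"
  unfolding magnitude_def
proof (rule the_equality)
  show "\<exists>W. is_inverse_of_Z X d W
      \<and> (\<lambda>l. \<Sum>x\<in>X. \<Sum>y\<in>X. mag_inverse X d \<delta> x y l) = (\<lambda>l. \<Sum>x\<in>X. \<Sum>y\<in>X. W x y l)"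
    using is_inverse_of_Z_mag_inverse[OF assms] by blast
next
  fix m assume "\<exists>W. is_inverse_of_Z X d W \<and> m = (\<lambda>l. \<Sum>x\<in>X. \<Sum>y\<in>X. W x y l)"
  then show "m = (\<lambda>l. \<Sum>x\<in>X. \<Sum>y\<in>X. mag_inverse X d \<delta> x y l)"
    using inverse_of_Z_eq_mag_inverse[OF assms] by (auto intro!: sum.cong)
qed


lemma alternating_sum_card_mag_gens_eq_magnitude:
  assumes "finite X" "quasi_metric_space X d" "uniformly_discrete X d \<delta>" "degree_bound \<delta> l \<le> N"
  shows "(\<Sum>n<N. (-1) ^ n * of_nat (card (mag_gens X d n l))) = magnitude X d l"
proof -
  have "(\<Sum>n<N. (-1) ^ n * of_nat (card (mag_gens X d n l)))
      = (\<Sum>x\<in>X. \<Sum>z\<in>X. \<Sum>n<N. (-1) ^ n * of_nat (card (mag_paths X d n x z l)))"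
    by (simp add: card_mag_gens_eq_sum_card_mag_paths[OF assms(1)] sum_distrib_left sum.swap[of _ "{..<N}"])
  also have "\<dots> = (\<Sum>x\<in>X. \<Sum>z\<in>X. mag_inverse X d \<delta> x z l)"
    using mag_inverse_eq_sum[OF assms(3,4)] by simp
  also have "\<dots> = magnitude X d l" by (simp add: magnitude_eq_sum_mag_inverse[OF assms(1-3)])
  finally show ?thesis .
qed

theorem corollary6p18:
  fixes X :: "'a set" and d :: "'a \<Rightarrow> 'a \<Rightarrow> real"
  assumes "finite X" and "quasi_metric_space X d"
  shows "hahn_tendsto (\<lambda>N. (\<lambda>l. \<Sum>n<N. (-1) ^ n * HM_rank_series X d n l)) (magnitude X d)"
  unfolding hahn_tendsto_def
proof
  fix L :: real
  obtain \<delta> where \<delta>: "uniformly_discrete X d \<delta>"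
    using finite_quasi_metric_space_uniformly_discrete[OF assms] .
  show "\<exists>N0. \<forall>N\<ge>N0. \<forall>l<L. (\<Sum>n<N. (-1) ^ n * HM_rank_series X d n l) = magnitude X d l"
  proof (intro exI[of _ "degree_bound \<delta> L"] allI impI)
    fix N l assume "degree_bound \<delta> L \<le> N" "l < L"
    then have "degree_bound \<delta> l \<le> N"
      using degree_bound_mono[of \<delta> l L] \<delta> unfolding uniformly_discrete_def by simp
    then show "(\<Sum>n<N. (-1) ^ n * HM_rank_series X d n l) = magnitude X d l"
      using alternating_sum_HM_rank[OF assms(2,1) mag_gens_eq_empty[OF \<delta>]]
        alternating_sum_card_mag_gens_eq_magnitude[OF assms \<delta>] by simp
  qed
qed

end
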